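(* Let $K\ge1$ and for each $k\in\{1,\dots,K\}$ let $P_{\max,k}>0$, $\mu_k\ge1$, $\Psi_k>0$. Let $q_k^+,q_k^-,c_k^+,c_k^-:\mathbb{R}_+^K\to\mathbb{R}_+$ be differentiable concave functions, and define $$\mathrm{WMEE}(\mathbf p)=\min_{k=1,\dots,K}\frac{q_k^+(\mathbf p)-q_k^-(\mathbf p)}{\mu_kp_k+\Psi_k}.$$ Consider the problem (P): maximize $\mathrm{WMEE}(\mathbf p)$ subject to $0\le p_k\le P_{\max,k}$ and $c_k^+(\mathbf p)-c_k^-(\mathbf p)\ge0$ for all $k$. For a given $\mathbf p_j$, let $\mathcal G_j$ be the problem $$\max_{\mathbf p}\ \min_{k=1,\dots,K}\frac{q_k^+(\mathbf p)-\big[q_k^-(\mathbf p_j)+(\nabla_{\mathbf p}q_k^-(\mathbf p_j))^T(\mathbf p-\mathbf p_j)\big]}{\mu_kp_k+\Psi_k}$$ subject to $0\le p_k\le P_{\max,k}$ and $c_k^+(\mathbf p)-\big[c_k^-(\mathbf p_j)+(\nabla_{\mathbf p}c_k^-(\mathbf p_j))^T(\mathbf p-\mathbf p_j)\big]\ge0$ for all $k$, and let $\mathbf p_j^\star$ denote an optimal solution of $\mathcal G_j$. Let $\mathbf p_0$ be any feasible point of (P) and set $\mathbf p_j=\mathbf p_{j-1}^\star$ for all $j\ge1$. Then the sequence $\{\mathrm{WMEE}(\mathbf p_j^\star)\}_j$ is monotonically increasing and converges.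
   Context: $\nabla_{\mathbf p}f(\mathbf p_j)$ denotes the gradient of $f$ with respect to $\mathbf p$ evaluated at $\mathbf p_j$. The problem (P) models (minimum) energy efficiency maximization, where $q_k^+-q_k^-$ is the achievable rate of link $k$ and $c_k^+-c_k^-\ge0$ are additional constraints. *)

theory Defs
  imports "HOL-Analysis.Analysis"
begin

text \<open>Power vectors live in R^K, indexed by a finite type 'k (K = CARD('k) \<ge> 1).\<close>

definition nonneg_orthant :: "(real ^ 'k) set" where
  "nonneg_orthant = {p. \<forall>k. 0 \<le> p $ k}"

definition WMEE :: "('k::finite \<Rightarrow> real ^ 'k \<Rightarrow> real) \<Rightarrow> ('k \<Rightarrow> real ^ 'k \<Rightarrow> real)
    \<Rightarrow> ('k \<Rightarrow> real) \<Rightarrow> ('k \<Rightarrow> real) \<Rightarrow> real ^ 'k \<Rightarrow> real" where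
  "WMEE qp qm mu Psi p = Min (range (\<lambda>k. (qp k p - qm k p) / (mu k * p $ k + Psi k)))"

definition feasible_P :: "('k \<Rightarrow> real) \<Rightarrow> ('k \<Rightarrow> real ^ 'k \<Rightarrow> real) \<Rightarrow> ('k \<Rightarrow> real ^ 'k \<Rightarrow> real)
    \<Rightarrow> (real ^ 'k) set" where
  "feasible_P Pmax cp cm = {p. \<forall>k. 0 \<le> p $ k \<and> p $ k \<le> Pmax k \<and> cp k p - cm k p \<ge> 0}"

text \<open>Objective of the surrogate problem G_j (around the point pj; gqm is the gradient of qm).\<close>
definition G_obj :: "('k::finite \<Rightarrow> real ^ 'k \<Rightarrow> real) \<Rightarrow> ('k \<Rightarrow> real ^ 'k \<Rightarrow> real)
    \<Rightarrow> ('k \<Rightarrow> real ^ 'k \<Rightarrow> real ^ 'k) \<Rightarrow> ('k \<Rightarrow> real) \<Rightarrow> ('k \<Rightarrow> real)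
    \<Rightarrow> real ^ 'k \<Rightarrow> real ^ 'k \<Rightarrow> real" where
  "G_obj qp qm gqm mu Psi pj p =
     Min (range (\<lambda>k. (qp k p - (qm k pj + gqm k pj \<bullet> (p - pj))) / (mu k * p $ k + Psi k)))"

text \<open>Feasible set of G_j (gcm is the gradient of cm).\<close>
definition feasible_G :: "('k \<Rightarrow> real) \<Rightarrow> ('k \<Rightarrow> real ^ 'k \<Rightarrow> real) \<Rightarrow> ('k \<Rightarrow> real ^ 'k \<Rightarrow> real)
    \<Rightarrow> ('k \<Rightarrow> real ^ 'k \<Rightarrow> real ^ 'k) \<Rightarrow> real ^ 'k \<Rightarrow> (real ^ 'k) set" where
  "feasible_G Pmax cp cm gcm pj = {p. \<forall>k. 0 \<le> p $ k \<and> p $ k \<le> Pmax k \<and>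
      cp k p - (cm k pj + gcm k pj \<bullet> (p - pj)) \<ge> 0}"

end

theory Submission
  imports Defs
begin

text \<open>The iteration is a minorize-maximize scheme. A concave function lies below each of its
  tangent planes, so linearizing \<open>qm\<close> and \<open>cm\<close> at \<open>p\<^sub>j\<close> over-estimates them: the objective of
  \<open>G\<^sub>j\<close> is a lower bound of \<open>WMEE\<close>, the feasible set of \<open>G\<^sub>j\<close> lies inside that of (P), and both
  are tight at \<open>p\<^sub>j\<close> itself. Therefore
  \<open>WMEE(p\<^sub>j\<^sup>\<star>) = G\<^sub>j\<^sub>+\<^sub>1(p\<^sub>j\<^sub>+\<^sub>1) \<le> G\<^sub>j\<^sub>+\<^sub>1(p\<^sub>j\<^sub>+\<^sub>1\<^sup>\<star>) \<le> WMEE(p\<^sub>j\<^sub>+\<^sub>1\<^sup>\<star>)\<close>.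
  All iterates stay in the compact feasible box of (P), on which \<open>WMEE\<close> is bounded above
  by continuity of \<open>qp\<close>; a bounded increasing real sequence converges.\<close>

lemma concave_on_le_tangent:
  fixes f :: "'a::real_normed_vector \<Rightarrow> real"
  assumes concave: "concave_on S f" and x: "x \<in> S" and c: "c \<in> S"
    and deriv: "(f has_derivative f') (at c within S)"
  shows "f x \<le> f c + f' (x - c)"
proof -
  define l where "l t = c + t *\<^sub>R (x - c)" for t :: real
  have l_convex_comb: "l t = (1 - t) *\<^sub>R c + t *\<^sub>R x" for t
    by (simp add: l_def algebra_simps)
  have l_in: "l ` {0..1} \<subseteq> S"
    using concave_on_imp_convex[OF concave] x c
    by (auto simp: l_convex_comb convex_def)
  have "(l has_derivative (\<lambda>t. t *\<^sub>R (x - c))) (at 0 within {0..1})"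
    unfolding l_def by (auto intro!: derivative_eq_intros)
  moreover have "(f has_derivative f') (at (l 0) within l ` {0..1})"
    using has_derivative_subset[OF deriv l_in] by (simp add: l_def)
  ultimately have "((f \<circ> l) has_derivative (\<lambda>t. f' (t *\<^sub>R (x - c)))) (at 0 within {0..1})"
    by (auto dest: diff_chain_within simp: o_def)
  moreover have "(\<lambda>t. f' (t *\<^sub>R (x - c))) = (*) (f' (x - c))"
    using linear_cmul[OF has_derivative_linear[OF deriv]] by (auto simp: fun_eq_iff)
  ultimately have "((f \<circ> l) has_field_derivative f' (x - c)) (at 0 within {0..1})"
    by (simp add: has_field_derivative_def)
  then have "((\<lambda>t. (f (l t) - f c) / t) \<longlongrightarrow> f' (x - c)) (at_right 0)"
    by (simp add: has_field_derivative_iff at_within_Icc_at_right l_def)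
  moreover have "eventually (\<lambda>t. t \<in> {0<..<1}) (at_right (0::real))"
    by (rule eventually_at_right_real) simp
  then have "eventually (\<lambda>t. f x - f c \<le> (f (l t) - f c) / t) (at_right 0)"
  proof eventually_elim
    case (elim t)
    then have "(1 - t) * f c + t * f x \<le> f (l t)"
      using concave_onD[OF concave, of t c x] x c by (simp add: l_convex_comb)
    with elim show ?case by (simp add: field_simps)
  qed
  ultimately have "f x - f c \<le> f' (x - c)"
    by (rule tendsto_lowerbound) simp
  then show ?thesis by simp
qed

lemma Min_range_mono:
  fixes f g :: "'k::finite \<Rightarrow> 'a::linorder"
  assumes "\<And>k. f k \<le> g k"
  shows "Min (range f) \<le> Min (range g)"
proof -
  have "Min (range g) \<in> range g"
    by (rule Min_in) auto
  then obtain k where "Min (range g) = g k"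
    by blast
  moreover have "Min (range f) \<le> f k" by simp
  ultimately show ?thesis using assms[of k] by (metis order_trans)
qed

lemma minorize_maximize_iterates_feasible:
  assumes "p 0 \<in> P"
    and "\<And>c. c \<in> P \<Longrightarrow> Q c \<subseteq> P"
    and "\<And>j. pstar j \<in> Q (p j)"
    and "\<And>j. p (Suc j) = pstar j"
  shows "p j \<in> P"
  using assms by (induction j) auto

lemma minorize_maximize_incseq:
  fixes F :: "'a \<Rightarrow> real"
  assumes feasible: "\<And>j. p j \<in> P"
    and tight_feasible: "\<And>c. c \<in> P \<Longrightarrow> c \<in> Q c"
    and tight_objective: "\<And>c. G c c = F c"
    and minorizes: "\<And>c x. c \<in> P \<Longrightarrow> x \<in> Q c \<Longrightarrow> G c x \<le> F x"
    and opt: "\<And>j. pstar j \<in> Q (p j) \<and> (\<forall>x \<in> Q (p j). G (p j) x \<le> G (p j) (pstar j))"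
    and step: "\<And>j. p (Suc j) = pstar j"
  shows "incseq (\<lambda>j. F (pstar j))"
proof (rule incseq_SucI)
  fix j
  have "F (pstar j) = G (p (Suc j)) (p (Suc j))"
    by (simp add: tight_objective step)
  also have "\<dots> \<le> G (p (Suc j)) (pstar (Suc j))"
    using opt tight_feasible[OF feasible] by blast
  also have "\<dots> \<le> F (pstar (Suc j))"
    using opt minorizes[OF feasible] by blast
  finally show "F (pstar j) \<le> F (pstar (Suc j))" .
qed

lemma minorize_maximize_convergent:
  fixes F :: "'a \<Rightarrow> real"
  assumes p0: "p 0 \<in> P"
    and Q_subset: "\<And>c. c \<in> P \<Longrightarrow> Q c \<subseteq> P"
    and tight_feasible: "\<And>c. c \<in> P \<Longrightarrow> c \<in> Q c"
    and tight_objective: "\<And>c. G c c = F c"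
    and minorizes: "\<And>c x. c \<in> P \<Longrightarrow> x \<in> Q c \<Longrightarrow> G c x \<le> F x"
    and opt: "\<And>j. pstar j \<in> Q (p j) \<and> (\<forall>x \<in> Q (p j). G (p j) x \<le> G (p j) (pstar j))"
    and step: "\<And>j. p (Suc j) = pstar j"
    and bounded: "bdd_above (F ` P)"
  shows "incseq (\<lambda>j. F (pstar j)) \<and> convergent (\<lambda>j. F (pstar j))"
proof -
  have feasible: "p j \<in> P" for j
    using minorize_maximize_iterates_feasible[where p = p and pstar = pstar and Q = Q,
        OF p0 Q_subset] opt step
    by blast
  have inc: "incseq (\<lambda>j. F (pstar j))"
    by (rule minorize_maximize_incseq[where P = P and Q = Q and p = p,
          OF feasible tight_feasible tight_objective minorizes opt step])
  have "range pstar \<subseteq> P"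
    using feasible step by (metis image_subsetI)
  then have "bdd_above (range (\<lambda>j. F (pstar j)))"
    using bounded by (metis bdd_above_mono image_image image_mono)
  with inc show ?thesis
    using LIMSEQ_incseq_SUP convergentI by blast
qed

lemma feasible_P_subset_nonneg_orthant: "feasible_P Pmax cp cm \<subseteq> nonneg_orthant"
  by (auto simp: feasible_P_def nonneg_orthant_def)

lemma feasible_P_imp_feasible_G:
  "c \<in> feasible_P Pmax cp cm \<Longrightarrow> c \<in> feasible_G Pmax cp cm gcm c"
  by (simp add: feasible_P_def feasible_G_def)

lemma feasible_G_subset_feasible_P:
  assumes "\<And>k. concave_on nonneg_orthant (cm k)"
    and "\<And>k. (cm k has_derivative (\<lambda>h. gcm k c \<bullet> h)) (at c within nonneg_orthant)"
    and "c \<in> nonneg_orthant"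
  shows "feasible_G Pmax cp cm gcm c \<subseteq> feasible_P Pmax cp cm"
proof
  fix x assume x: "x \<in> feasible_G Pmax cp cm gcm c"
  then have "x \<in> nonneg_orthant"
    by (auto simp: feasible_G_def nonneg_orthant_def)
  then have tangent: "cm k x \<le> cm k c + gcm k c \<bullet> (x - c)" for k
    using concave_on_le_tangent assms by blast
  show "x \<in> feasible_P Pmax cp cm"
    unfolding feasible_P_def
  proof (intro CollectI allI)
    fix k
    have "0 \<le> x $ k \<and> x $ k \<le> Pmax k \<and> cm k c + gcm k c \<bullet> (x - c) \<le> cp k x"
      using x by (simp add: feasible_G_def)
    with tangent[of k] show "0 \<le> x $ k \<and> x $ k \<le> Pmax k \<and> cp k x - cm k x \<ge> 0"
      by linarith
  qed
qed

lemma G_obj_self: "G_obj qp qm gqm mu Psi c c = WMEE qp qm mu Psi c"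
  by (simp add: G_obj_def WMEE_def)

lemma G_obj_le_WMEE:
  assumes "\<And>k. concave_on nonneg_orthant (qm k)"
    and "\<And>k. (qm k has_derivative (\<lambda>h. gqm k c \<bullet> h)) (at c within nonneg_orthant)"
    and "\<And>k. mu k \<ge> 0" and "\<And>k. Psi k > 0"
    and "c \<in> nonneg_orthant" and x: "x \<in> nonneg_orthant"
  shows "G_obj qp qm gqm mu Psi c x \<le> WMEE qp qm mu Psi x"
  unfolding G_obj_def WMEE_def
proof (rule Min_range_mono)
  fix k
  have "0 < mu k * x $ k + Psi k"
    using assms(3,4)[of k] x by (simp add: nonneg_orthant_def add_nonneg_pos)
  moreover have "qm k x \<le> qm k c + gqm k c \<bullet> (x - c)"
    using concave_on_le_tangent assms by blast
  ultimately show "(qp k x - (qm k c + gqm k c \<bullet> (x - c))) / (mu k * x $ k + Psi k)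
      \<le> (qp k x - qm k x) / (mu k * x $ k + Psi k)"
    by (simp add: divide_right_mono)
qed

lemma bdd_above_WMEE_feasible_P:
  fixes Pmax :: "'k::finite \<Rightarrow> real"
  assumes "continuous_on nonneg_orthant (qp k)"
    and "\<And>x. x \<in> nonneg_orthant \<Longrightarrow> qm k x \<ge> 0"
    and "mu k \<ge> 0" and "Psi k > 0"
  shows "bdd_above (WMEE qp qm mu Psi ` feasible_P Pmax cp cm)"
proof -
  define box :: "(real ^ 'k) set" where "box = cbox 0 (\<chi> i. Pmax i)"
  have box_orthant: "box \<subseteq> nonneg_orthant"
    by (auto simp: box_def mem_box_cart nonneg_orthant_def)
  have "compact (qp k ` box)"
    using assms(1) box_orthant
    by (intro compact_continuous_image) (auto simp: box_def intro: continuous_on_subset)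
  then have "bounded (qp k ` box)"
    by (rule compact_imp_bounded)
  then obtain M where M: "\<And>x. x \<in> box \<Longrightarrow> \<bar>qp k x\<bar> \<le> M"
    unfolding bounded_iff by auto
  have "WMEE qp qm mu Psi x \<le> M / Psi k" if x: "x \<in> feasible_P Pmax cp cm" for x
  proof -
    have x_box: "x \<in> box" and x_orthant: "x \<in> nonneg_orthant"
      using x by (auto simp: feasible_P_def box_def mem_box_cart nonneg_orthant_def)
    have den: "Psi k \<le> mu k * x $ k + Psi k"
      using x_orthant assms(3) by (simp add: nonneg_orthant_def)
    have "WMEE qp qm mu Psi x \<le> (qp k x - qm k x) / (mu k * x $ k + Psi k)"
      unfolding WMEE_def by (rule Min_le) auto
    also have "\<dots> \<le> \<bar>qp k x\<bar> / (mu k * x $ k + Psi k)"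
      using assms(2)[OF x_orthant] den assms(4) by (intro divide_right_mono) auto
    also have "\<dots> \<le> \<bar>qp k x\<bar> / Psi k"
      using den assms(4) by (intro divide_left_mono) auto
    also have "\<dots> \<le> M / Psi k"
      using M[OF x_box] assms(4) by (intro divide_right_mono) auto
    finally show ?thesis .
  qed
  then show ?thesis by (auto simp: bdd_above_def)
qed

theorem proposition7:
  fixes Pmax mu Psi :: "'k::finite \<Rightarrow> real"
    and qp qm cp cm :: "'k \<Rightarrow> real ^ 'k \<Rightarrow> real"
    and gqm gcm :: "'k \<Rightarrow> real ^ 'k \<Rightarrow> real ^ 'k"
    and p pstar :: "nat \<Rightarrow> real ^ 'k"
  assumes Pmax_pos: "\<And>k. Pmax k > 0"
    and mu_ge: "\<And>k. mu k \<ge> 1"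
    and Psi_pos: "\<And>k. Psi k > 0"
    and nonneg: "\<And>k x. x \<in> nonneg_orthant \<Longrightarrow>
                   qp k x \<ge> 0 \<and> qm k x \<ge> 0 \<and> cp k x \<ge> 0 \<and> cm k x \<ge> 0"
    and concave: "\<And>k. concave_on nonneg_orthant (qp k) \<and> concave_on nonneg_orthant (qm k)
                   \<and> concave_on nonneg_orthant (cp k) \<and> concave_on nonneg_orthant (cm k)"
    and diff_qp: "\<And>k x. x \<in> nonneg_orthant \<Longrightarrow> qp k differentiable (at x within nonneg_orthant)"
    and diff_cp: "\<And>k x. x \<in> nonneg_orthant \<Longrightarrow> cp k differentiable (at x within nonneg_orthant)"
    and grad_qm: "\<And>k x. x \<in> nonneg_orthant \<Longrightarrow>
                   (qm k has_derivative (\<lambda>h. gqm k x \<bullet> h)) (at x within nonneg_orthant)"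
    and grad_cm: "\<And>k x. x \<in> nonneg_orthant \<Longrightarrow>
                   (cm k has_derivative (\<lambda>h. gcm k x \<bullet> h)) (at x within nonneg_orthant)"
    and p0: "p 0 \<in> feasible_P Pmax cp cm"
    and opt: "\<And>j. pstar j \<in> feasible_G Pmax cp cm gcm (p j) \<and>
               (\<forall>x \<in> feasible_G Pmax cp cm gcm (p j).
                  G_obj qp qm gqm mu Psi (p j) x \<le> G_obj qp qm gqm mu Psi (p j) (pstar j))"
    and step: "\<And>j. p (Suc j) = pstar j"
  shows "incseq (\<lambda>j. WMEE qp qm mu Psi (pstar j)) \<and>
         convergent (\<lambda>j. WMEE qp qm mu Psi (pstar j))"
proof -
  let ?P = "feasible_P Pmax cp cm" and ?Q = "feasible_G Pmax cp cm gcm"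
  note orthant = subsetD[OF feasible_P_subset_nonneg_orthant]
  have mu_nonneg: "mu k \<ge> 0" for k
    using mu_ge[of k] by linarith
  have Q_subset: "?Q c \<subseteq> ?P" if "c \<in> ?P" for c
    using that orthant concave grad_cm by (intro feasible_G_subset_feasible_P) auto
  have minorizes: "G_obj qp qm gqm mu Psi c x \<le> WMEE qp qm mu Psi x"
    if "c \<in> ?P" and "x \<in> ?Q c" for c x
  proof -
    have "c \<in> nonneg_orthant" and "x \<in> nonneg_orthant"
      using that Q_subset orthant by blast+
    then show ?thesis
      using concave grad_qm mu_nonneg Psi_pos by (intro G_obj_le_WMEE) auto
  qed
  fix k :: 'k
  have "continuous_on nonneg_orthant (qp k)"
    using diff_qp differentiable_imp_continuous_within continuous_on_eq_continuous_within
    by blast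
  then have bounded: "bdd_above (WMEE qp qm mu Psi ` ?P)"
    using nonneg mu_nonneg Psi_pos by (intro bdd_above_WMEE_feasible_P) auto
  show ?thesis
    by (rule minorize_maximize_convergent[where p = p and pstar = pstar and G = "G_obj qp qm gqm mu Psi",
          OF p0 Q_subset feasible_P_imp_feasible_G G_obj_self minorizes opt step])
      (simp_all add: bounded)
qed

end
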